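(* Let $\Pi = (\mathcal{A}, \mathcal{E}, \mathcal{R})$ be an epistemic logic program and let $\Pi' = (\mathcal{A}', \mathcal{E}', \mathcal{R})$ be an epistemic logic program with the same set of rules $\mathcal{R}$, but with $\mathcal{A}' \supset \mathcal{A}$ and $\mathcal{E}' \supset \mathcal{E}$. Then the sets of candidate world views of $\Pi$ and $\Pi'$ coincide: $\mathrm{CWV}(\Pi) = \mathrm{CWV}(\Pi')$.
   Context: A literal over a set of propositional atoms $\mathcal{A}$ is an atom $a$ or its default negation $\neg a$. An interpretation is a set $I\subseteq\mathcal{A}$; $I\models a$ iff $a\in I$, $I\models \neg \ell$ iff $I\not\models \ell$ (so doubly negated atoms are allowed), extended to sets of literals conjunctively. A (plain) logic program is a pair $(\mathcal{A},\mathcal{R})$ of atoms and rules $a_1\vee\cdots\vee a_l \leftarrow a_{l+1},\ldots,a_m,\neg\ell_1,\ldots,\neg\ell_n$ ($a_i$ atoms, $\ell_i$ literals); for a rule $r$, $H(r)$ is the head set, $B(r)$ the body and $B^+(r)=\{a_{l+1},\ldots,a_m\}$. $M\models r$ iff $M\models B(r)$ implies $M\models$ some atom of $H(r)$; models of a program are interpretations satisfying all rules. The GL-reduct of $\Pi=(\mathcal{A},\mathcal{R})$ w.r.t. $I$ is $(\mathcal{A},\{H(r)\leftarrow B^+(r)\mid r\in\mathcal{R},\ I\models\neg\ell \text{ for all } \neg\ell\in B(r)\})$. $M$ is an answer set of $\Pi$ iff $M$ is a model of $\Pi$ and no $M'\subset M$ is a model of the GL-reduct $\Pi^M$; $AS(\Pi)$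 is the set of answer sets (triple negations $\neg\neg\neg a$ are treated as $\neg a$). An epistemic literal is $\mathbf{not}\,\ell$ for a literal $\ell$. An epistemic logic program (ELP) is a triple $(\mathcal{A},\mathcal{E},\mathcal{R})$ with $\mathcal{E}$ a set of epistemic literals over $\mathcal{A}$ and $\mathcal{R}$ a set of rules $a_1\vee\cdots\vee a_k\leftarrow \ell_1,\ldots,\ell_m,\xi_1,\ldots,\xi_j,\neg\xi_{j+1},\ldots,\neg\xi_n$ with $a_i\in\mathcal{A}$, $\ell_i$ literals, $\xi_i\in\mathcal{E}$. A guess is a subset $\Phi\subseteq\mathcal{E}$. A set $\mathcal{I}$ of interpretations is $\Phi$-compatible w.r.t. $\mathcal{E}$ iff (1) $\mathcal{I}\neq\emptyset$, (2) for each $\mathbf{not}\,\ell\in\Phi$ some $I\in\mathcal{I}$ has $I\not\models\ell$, and (3) for each $\mathbf{not}\,\ell\in\mathcal{E}\setminus\Phi$ all $I\in\mathcal{I}$ satisfy $I\models\ell$. The epistemic reduct $\Pi^\Phi$ is the logic program $(\mathcal{A},\mathcal{R}^\Phi)$ obtained by replacing in every rule each occurrence of $\mathbf{not}\,\ell\in\Phi$ by $\top$ and every remaining $\mathbf{not}$ by $\neg$. A set $\mathcal{M}$ of interpretations is a candidate world view (CWV) of $\Pi$ iff there is a guess $\Phi\subseteq\mathcal{E}$ with $\mathcal{M}=AS(\Pi^\Phi)$ and $\mathcal{M}$ $\Phi$-compatible w.r.t. $\mathcal{E}$; $\mathrm{CWV}(\Pi)$ denotes the set of CWVs. *)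

theory Defs
  imports Main
begin

datatype 'a lit = Atom 'a | Neg "'a lit"

fun lit_atoms :: "'a lit \<Rightarrow> 'a set" where
  "lit_atoms (Atom a) = {a}"
| "lit_atoms (Neg l) = lit_atoms l"

fun sat :: "'a set \<Rightarrow> 'a lit \<Rightarrow> bool" where
  "sat I (Atom a) = (a \<in> I)"
| "sat I (Neg l) = (\<not> sat I l)"

text \<open>A plain rule  h1 v ... v hl <- p1,...,pk, not l1, ..., not ln.
  The field nbody lists the literals l_i such that the negated literal (Neg l_i)
  occurs in the body.\<close>
datatype 'a rule = Rule (head: "'a list") (pbody: "'a list") (nbody: "'a lit list")

type_synonym 'a program = "'a set \<times> 'a rule set"

definition rule_sat :: "'a set \<Rightarrow> 'a rule \<Rightarrow> bool" where
  "rule_sat M r \<longleftrightarrow>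
     ((\<forall>a\<in>set (pbody r). a \<in> M) \<and> (\<forall>l\<in>set (nbody r). \<not> sat M l)
        \<longrightarrow> (\<exists>a\<in>set (head r). a \<in> M))"

definition is_model :: "'a program \<Rightarrow> 'a set \<Rightarrow> bool" where
  "is_model P M \<longleftrightarrow> M \<subseteq> fst P \<and> (\<forall>r\<in>snd P. rule_sat M r)"

definition gl_reduct :: "'a program \<Rightarrow> 'a set \<Rightarrow> 'a program" where
  "gl_reduct P I =
     (fst P, {Rule (head r) (pbody r) [] | r. r \<in> snd P \<and> (\<forall>l\<in>set (nbody r). \<not> sat I l)})"

definition AS :: "'a program \<Rightarrow> 'a set set" where
  "AS P = {M. is_model P M \<and> \<not> (\<exists>M'. M' \<subset> M \<and> is_model (gl_reduct P M) M')}"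

datatype 'a elit = ENot "'a lit"

fun elit_atoms :: "'a elit \<Rightarrow> 'a set" where
  "elit_atoms (ENot l) = lit_atoms l"

text \<open>ELP rule  h1 v ... v hk <- l1,...,lm, xi_1,...,xi_j, neg xi_(j+1), ..., neg xi_n.
  ebody: the literals l_i; epos: the xi_1..xi_j; eneg: xi_(j+1)..xi_n.\<close>
datatype 'a erule =
  ERule (ehead: "'a list") (ebody: "'a lit list") (epos: "'a elit list") (eneg: "'a elit list")

type_synonym 'a elp = "'a set \<times> 'a elit set \<times> 'a erule set"

definition erule_atoms :: "'a erule \<Rightarrow> 'a set" where
  "erule_atoms r = set (ehead r) \<union> (\<Union>l\<in>set (ebody r). lit_atoms l)
     \<union> (\<Union>x\<in>set (epos r). elit_atoms x) \<union> (\<Union>x\<in>set (eneg r). elit_atoms x)"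

definition wf_elp :: "'a elp \<Rightarrow> bool" where
  "wf_elp P \<longleftrightarrow> (case P of (A, E, R) \<Rightarrow>
      (\<forall>x\<in>E. elit_atoms x \<subseteq> A) \<and>
      (\<forall>r\<in>R. erule_atoms r \<subseteq> A \<and> set (epos r) \<subseteq> E \<and> set (eneg r) \<subseteq> E))"

fun elit_lit :: "'a elit \<Rightarrow> 'a lit" where
  "elit_lit (ENot l) = l"

text \<open>Occurrences of \<open>not l\<close> in Phi become top: dropped from the body if positive;
  if they occur negated, the body contains neg top = bottom and the rule is removed.
  Remaining \<open>not l\<close> become \<open>neg l\<close>, so a positive occurrence yields body
  literal neg l and a negated occurrence yields neg neg l.\<close>
definition ereduct_rule :: "'a elit set \<Rightarrow> 'a erule \<Rightarrow> 'a rule" where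
  "ereduct_rule Phi r =
     Rule (ehead r)
          [a. Atom a \<leftarrow> ebody r]
          ([l. Neg l \<leftarrow> ebody r]
           @ [elit_lit x. x \<leftarrow> epos r, x \<notin> Phi]
           @ [Neg (elit_lit x). x \<leftarrow> eneg r, x \<notin> Phi])"

definition ereduct :: "'a elp \<Rightarrow> 'a elit set \<Rightarrow> 'a program" where
  "ereduct P Phi = (case P of (A, E, R) \<Rightarrow>
      (A, {ereduct_rule Phi r | r. r \<in> R \<and> set (eneg r) \<inter> Phi = {}}))"

definition compatible :: "'a elit set \<Rightarrow> 'a elit set \<Rightarrow> 'a set set \<Rightarrow> bool" where
  "compatible E Phi \<I> \<longleftrightarrow>
     \<I> \<noteq> {} \<and>
     (\<forall>l. ENot l \<in> Phi \<longrightarrow> (\<exists>I\<in>\<I>. \<not> sat I l)) \<and>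
     (\<forall>l. ENot l \<in> E - Phi \<longrightarrow> (\<forall>I\<in>\<I>. sat I l))"

definition CWV :: "'a elp \<Rightarrow> 'a set set set" where
  "CWV P = {\<M>. \<exists>Phi. Phi \<subseteq> fst (snd P) \<and> \<M> = AS (ereduct P Phi)
                      \<and> compatible (fst (snd P)) Phi \<M>}"

end

theory Submission
  imports Defs
begin

text \<open>Compatibility leaves no freedom in the guess: a compatible guess \<open>\<Phi> \<subseteq> \<E>\<close> consists
  exactly of those \<open>not \<ell> \<in> \<E>\<close> for which some interpretation of the world view falsifies \<open>\<ell>\<close>.
  Enlarging \<open>\<E>\<close> therefore only adds guessed literals that occur in no rule, and so does not
  change the epistemic reduct. Enlarging \<open>\<A>\<close> does not change the answer sets either: an answer
  set of a program whose rules only mention atoms of \<open>\<A>\<close> lies inside \<open>\<A>\<close>, since its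
  intersection with \<open>\<A>\<close> is again a model of the GL-reduct.\<close>

definition rule_atoms :: "'a rule \<Rightarrow> 'a set" where
  "rule_atoms r = set (head r) \<union> set (pbody r) \<union> (\<Union>l\<in>set (nbody r). lit_atoms l)"

lemma sat_Int: "lit_atoms l \<subseteq> A \<Longrightarrow> sat (M \<inter> A) l = sat M l"
  by (induction l) auto

lemma rule_sat_Int:
  assumes "rule_atoms r \<subseteq> A"
  shows "rule_sat (M \<inter> A) r = rule_sat M r"
proof -
  have "sat (M \<inter> A) l = sat M l" if "l \<in> set (nbody r)" for l
    using that assms by (intro sat_Int) (auto simp: rule_atoms_def)
  then show ?thesis
    using assms by (auto simp: rule_sat_def rule_atoms_def)
qed

lemma rule_atoms_gl_reduct:
  assumes "\<forall>r\<in>snd P. rule_atoms r \<subseteq> A"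
  shows "\<forall>r\<in>snd (gl_reduct P I). rule_atoms r \<subseteq> A"
proof
  fix r'
  assume "r' \<in> snd (gl_reduct P I)"
  then obtain r where "r \<in> snd P" and "r' = Rule (head r) (pbody r) []"
    by (auto simp: gl_reduct_def)
  then show "rule_atoms r' \<subseteq> A"
    using assms by (auto simp: rule_atoms_def)
qed

lemma is_model_gl_reduct: "is_model P M \<Longrightarrow> is_model (gl_reduct P M) M"
  by (auto simp: is_model_def gl_reduct_def rule_sat_def)

lemma AS_subset_atoms:
  assumes "\<forall>r\<in>S. rule_atoms r \<subseteq> A" and "M \<in> AS (A', S)"
  shows "M \<subseteq> A"
proof -
  let ?P = "gl_reduct (A', S) M"
  have "is_model ?P M"
    using assms(2) by (simp add: AS_def is_model_gl_reduct)
  moreover have "\<forall>r\<in>snd ?P. rule_atoms r \<subseteq> A"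
    using assms(1) rule_atoms_gl_reduct[of "(A', S)"] by simp
  ultimately have "is_model ?P (M \<inter> A)"
    by (auto simp: is_model_def rule_sat_Int)
  then have "\<not> M \<inter> A \<subset> M"
    using assms(2) by (auto simp: AS_def)
  then show ?thesis
    by blast
qed

lemma AS_extend_atoms:
  assumes "A \<subseteq> A'" and "\<forall>r\<in>S. rule_atoms r \<subseteq> A"
  shows "AS (A', S) = AS (A, S)"
proof (rule set_eqI)
  fix M
  show "M \<in> AS (A', S) \<longleftrightarrow> M \<in> AS (A, S)"
  proof (cases "M \<subseteq> A")
    case True
    have model: "is_model (A', S') M' \<longleftrightarrow> is_model (A, S') M'" if "M' \<subseteq> M" for M' S'
      using that True assms(1) by (auto simp: is_model_def)
    obtain T where "gl_reduct (A', S) M = (A', T)" and "gl_reduct (A, S) M = (A, T)"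
      by (simp add: gl_reduct_def)
    then show ?thesis
      unfolding AS_def mem_Collect_eq by (metis model less_imp_le order_refl)
  next
    case False
    then show ?thesis
      using AS_subset_atoms[OF assms(2)] by blast
  qed
qed

lemma lit_atoms_elit_lit [simp]: "lit_atoms (elit_lit x) = elit_atoms x"
  by (cases x) simp

lemma rule_atoms_ereduct_rule: "rule_atoms (ereduct_rule Phi r) \<subseteq> erule_atoms r"
  unfolding rule_atoms_def erule_atoms_def ereduct_rule_def
  by (simp split: lit.splits) (intro conjI; force)

lemma ereduct_rule_cong:
  assumes "set (epos r) \<subseteq> E" and "set (eneg r) \<subseteq> E" and "Phi \<inter> E = Phi' \<inter> E"
  shows "ereduct_rule Phi r = ereduct_rule Phi' r"
proof -
  have "x \<in> Phi \<longleftrightarrow> x \<in> Phi'" if "x \<in> set (epos r) \<union> set (eneg r)" for x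
    using that assms by blast
  then show ?thesis
    unfolding ereduct_rule_def by (simp cong: map_cong)
qed

lemma ereduct_cong:
  assumes "\<forall>r\<in>R. set (epos r) \<subseteq> E \<and> set (eneg r) \<subseteq> E" and "Phi \<inter> E = Phi' \<inter> E"
  shows "ereduct (A', E', R) Phi' = (A', snd (ereduct (A, E, R) Phi))"
proof -
  have "{r \<in> R. set (eneg r) \<inter> Phi' = {}} = {r \<in> R. set (eneg r) \<inter> Phi = {}}"
    using assms by blast
  moreover have "ereduct_rule Phi' r = ereduct_rule Phi r" if "r \<in> R" for r
    using that assms ereduct_rule_cong[of r E Phi' Phi] by auto
  ultimately have "ereduct_rule Phi' ` {r \<in> R. set (eneg r) \<inter> Phi' = {}}
      = ereduct_rule Phi ` {r \<in> R. set (eneg r) \<inter> Phi = {}}"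
    by (intro image_cong) auto
  then show ?thesis
    unfolding ereduct_def setcompr_eq_image by simp
qed

lemma AS_ereduct_cong:
  assumes "wf_elp (A, E, R)" and "A \<subseteq> A'" and "Phi \<inter> E = Phi' \<inter> E"
  shows "AS (ereduct (A', E', R) Phi') = AS (ereduct (A, E, R) Phi)"
proof -
  let ?S = "snd (ereduct (A, E, R) Phi)"
  have wf: "\<forall>r\<in>R. erule_atoms r \<subseteq> A \<and> set (epos r) \<subseteq> E \<and> set (eneg r) \<subseteq> E"
    using assms(1) by (simp add: wf_elp_def)
  then have "\<forall>r\<in>?S. rule_atoms r \<subseteq> A"
    using rule_atoms_ereduct_rule by (fastforce simp: ereduct_def)
  moreover have "ereduct (A, E, R) Phi = (A, ?S)"
    by (simp add: ereduct_def)
  moreover have "ereduct (A', E', R) Phi' = (A', ?S)"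
    using wf assms(3) by (simp add: ereduct_cong)
  ultimately show ?thesis
    using AS_extend_atoms[OF assms(2)] by metis
qed

definition induced_guess :: "'a elit set \<Rightarrow> 'a set set \<Rightarrow> 'a elit set" where
  "induced_guess E \<M> = {x \<in> E. \<exists>I\<in>\<M>. \<not> sat I (elit_lit x)}"

lemma induced_guess_subset: "induced_guess E \<M> \<subseteq> E"
  by (auto simp: induced_guess_def)

lemma induced_guess_Int: "E \<subseteq> E' \<Longrightarrow> induced_guess E' \<M> \<inter> E = induced_guess E \<M>"
  by (auto simp: induced_guess_def)

lemma compatible_iff_induced_guess:
  assumes "Phi \<subseteq> E"
  shows "compatible E Phi \<M> \<longleftrightarrow> \<M> \<noteq> {} \<and> Phi = induced_guess E \<M>"
proof -
  have ENot_all: "(\<forall>l. ENot l \<in> S \<longrightarrow> Q l) \<longleftrightarrow> (\<forall>x\<in>S. Q (elit_lit x))"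
    for S and Q :: "'a lit \<Rightarrow> bool"
    by (metis elit.exhaust elit_lit.simps)
  have "compatible E Phi \<M> \<longleftrightarrow>
      \<M> \<noteq> {} \<and> (\<forall>x\<in>E. x \<in> Phi \<longleftrightarrow> (\<exists>I\<in>\<M>. \<not> sat I (elit_lit x)))"
    unfolding compatible_def ENot_all using assms by blast
  then show ?thesis
    using assms unfolding induced_guess_def by auto
qed

lemma CWV_eq_induced_guess:
  "CWV P = {\<M>. \<M> \<noteq> {} \<and> \<M> = AS (ereduct P (induced_guess (fst (snd P)) \<M>))}"
proof (intro set_eqI iffI)
  fix \<M>
  assume "\<M> \<in> CWV P"
  then obtain Phi where "Phi \<subseteq> fst (snd P)" and "\<M> = AS (ereduct P Phi)"
    and "compatible (fst (snd P)) Phi \<M>"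
    unfolding CWV_def by blast
  then show "\<M> \<in> {\<M>. \<M> \<noteq> {} \<and> \<M> = AS (ereduct P (induced_guess (fst (snd P)) \<M>))}"
    by (simp add: compatible_iff_induced_guess)
next
  fix \<M>
  assume "\<M> \<in> {\<M>. \<M> \<noteq> {} \<and> \<M> = AS (ereduct P (induced_guess (fst (snd P)) \<M>))}"
  moreover have "\<M> \<noteq> {} \<Longrightarrow> compatible (fst (snd P)) (induced_guess (fst (snd P)) \<M>) \<M>"
    by (simp add: compatible_iff_induced_guess induced_guess_subset)
  ultimately show "\<M> \<in> CWV P"
    unfolding CWV_def using induced_guess_subset by blast
qed

theorem theorem1:
  fixes A A' :: "'a set" and E E' :: "'a elit set" and R :: "'a erule set"
  assumes "wf_elp (A, E, R)"
      and "wf_elp (A', E', R)"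
      and "A \<subseteq> A'"
      and "E \<subseteq> E'"
  shows "CWV (A, E, R) = CWV (A', E', R)"
proof -
  have "induced_guess E \<M> \<inter> E = induced_guess E' \<M> \<inter> E" for \<M>
    using induced_guess_subset[of E \<M>] induced_guess_Int[OF assms(4), of \<M>] by blast
  then have "AS (ereduct (A', E', R) (induced_guess E' \<M>)) = AS (ereduct (A, E, R) (induced_guess E \<M>))"
    for \<M>
    by (rule AS_ereduct_cong[OF assms(1,3)])
  then show ?thesis
    by (simp add: CWV_eq_induced_guess)
qed

end
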